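(* Let $\Omega$ be the sojourn time of an arbitrary batch in the stationary regime, i.e. the random variable whose Laplace transform is $$\mathbb{E}(e^{-s\Omega})=\sum_{n=0}^\infty\sum_{b=1}^\infty e^*_{n,b}(s)\,\mathbb{P}(N=n)\,\mathbb{P}(B=b),$$ where $B$ is the geometric batch size and $N$ (independent of $B$) has the stationary distribution $\mathbb{P}(N=0)=1-\frac{\rho}{1-q}$ and $\mathbb{P}(N=n)=\left(1-\frac{\rho}{1-q}\right)\rho(\rho+q)^{n-1}$ for $n\ge1$. Then for $\Re(s)\ge0$, $$\mathbb{E}(e^{-s\Omega})=\frac{1-\rho-q}{q(\rho+q)}\left(\rho^2F(s;\rho+q,q)+\frac{q^3+\rho\,(qs+\rho+2q(1-q))\,E(s;q,q)}{q+\rho+qs-q^2}\right).$$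
   Context: Queueing model: an $M^{[X]}/M/1$ processor-sharing queue. Batches of jobs arrive according to a Poisson process with rate $\rho>0$; each job requires an exponentially distributed amount of service with mean $1$; the server has unit capacity, shared equally among all jobs present (processor sharing); interarrival times, batch sizes and service requirements are mutually independent. Batch sizes are geometric: $\mathbb{P}(B=b)=(1-q)q^{b-1}$, $b\ge1$, where $q\in(0,1)$ and $\rho+q<1$. For $n\ge0$, $b\ge1$, $\Omega_{n,b}$ denotes the sojourn time of a tagged batch (time between its arrival and the departure of the last of its jobs) given that $n$ jobs are in the system at its arrival and that the batch contains $b$ jobs, and $e^*_{n,b}(s)=\mathbb{E}(e^{-s\Omega_{n,b}})$ for $\Re(s)\ge0$. Let $\mathbb{D}=\{u\in\mathbb{C}:|u|<1\}$ and $E(s;u,v)=\sum_{n\ge0}\sum_{b\ge1}e^*_{n,b}(s)u^nv^b$ for $(u,v)\in\mathbb{D}^2$. Define $F(s;u,v)=\frac{E(s;u,v)-E(s;q,v)}{u-q}$ for $u\in\mathbb{D}\setminus\{q\}$ and $F(s;q,v)=\frac{\partial E}{\partial u}(s;q,v)$. *)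

theory Defs
  imports "HOL-Analysis.Analysis"
begin

(* Tagged-batch dynamics as a continuous-time Markov chain on states (n,b):
   n = number of other jobs, b = remaining jobs of the tagged batch.
   While b >= 1 the system is nonempty, so the total event rate is constant, 1 + rho:
   batch arrivals at rate rho (size j+1 with prob (1-q) q^j), departures at rate 1
   (processor sharing, exp(1) jobs); a departure is a tagged job with prob b/(n+b).
   Hence Omega_{n,b} = sum of K i.i.d. Exp(1+rho) holding times, K = number of jumps of the
   embedded chain until b = 0.  absorb_prob rho q k n b = P(K = k | start (n,b)). *)

primrec absorb_prob :: "real \<Rightarrow> real \<Rightarrow> nat \<Rightarrow> nat \<Rightarrow> nat \<Rightarrow> real" where
  "absorb_prob \<rho> q 0 n b = (if b = 0 then 1 else 0)"
| "absorb_prob \<rho> q (Suc k) n b =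
     (if b = 0 then 0 else
        \<rho> / (1 + \<rho>) * (\<Sum>j. (1 - q) * q ^ j * absorb_prob \<rho> q k (n + Suc j) b)
      + 1 / (1 + \<rho>) * (real b / real (n + b) * absorb_prob \<rho> q k n (b - 1)
                         + real n / real (n + b) * absorb_prob \<rho> q k (n - 1) b))"

(* e*_{n,b}(s) = E(exp(-s Omega_{n,b})) *)
definition estar :: "real \<Rightarrow> real \<Rightarrow> nat \<Rightarrow> nat \<Rightarrow> complex \<Rightarrow> complex" where
  "estar \<rho> q n b s =
     (\<Sum>k. complex_of_real (absorb_prob \<rho> q k n b) * (complex_of_real (1 + \<rho>) / (complex_of_real (1 + \<rho>) + s)) ^ k)"

definition Egf :: "real \<Rightarrow> real \<Rightarrow> complex \<Rightarrow> complex \<Rightarrow> complex \<Rightarrow> complex" where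
  "Egf \<rho> q s u v = (\<Sum>n. \<Sum>b. estar \<rho> q n (Suc b) s * u ^ n * v ^ Suc b)"

definition Fgf :: "real \<Rightarrow> real \<Rightarrow> complex \<Rightarrow> complex \<Rightarrow> complex \<Rightarrow> complex" where
  "Fgf \<rho> q s u v =
     (if u = complex_of_real q then deriv (\<lambda>w. Egf \<rho> q s w v) (complex_of_real q)
      else (Egf \<rho> q s u v - Egf \<rho> q s (complex_of_real q) v) / (u - complex_of_real q))"

definition batch_pmf :: "real \<Rightarrow> nat \<Rightarrow> real" where
  "batch_pmf q b = (if b = 0 then 0 else (1 - q) * q ^ (b - 1))"

definition stat_pmf :: "real \<Rightarrow> real \<Rightarrow> nat \<Rightarrow> real" where
  "stat_pmf \<rho> q n = (if n = 0 then 1 - \<rho> / (1 - q)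
                       else (1 - \<rho> / (1 - q)) * \<rho> * (\<rho> + q) ^ (n - 1))"

definition stat_LT :: "real \<Rightarrow> real \<Rightarrow> complex \<Rightarrow> complex" where
  "stat_LT \<rho> q s = (\<Sum>n. \<Sum>b. estar \<rho> q n (Suc b) s
       * complex_of_real (stat_pmf \<rho> q n) * complex_of_real (batch_pmf q (Suc b)))"

end

theory Submission
  imports Defs
begin

(* Between events the tagged batch sees the constant total rate 1 + rho, so e*_{n,b}(s) is the
   generating function of the number of jumps until absorption, evaluated at (1+rho)/(1+rho+s).
   The absorption probabilities form a sub-probability distribution, hence |e*_{n,b}(s)| <= 1 for
   Re s >= 0 and all the double series involved converge absolutely.  Conditioning on the first
   jump from a system that is empty apart from the tagged batch gives
     (1+rho+s) e*_{0,b+1} = rho sum_j (1-q) q^j e*_{j+1,b+1} + e*_{0,b};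
   multiplying by v^(b+1) and summing over b expresses the boundary row
   E_0(v) = sum_b e*_{0,b+1} v^(b+1) through E(s;q,v).  Since P(N = n) P(B = b) is geometric in
   n >= 1 and in b, the transform of Omega is a combination of E_0(q) and E(s;rho+q,q), and
   eliminating E_0(q) with the boundary equation at v = q gives the formula. *)

section \<open>Absolutely convergent series\<close>

lemma infsum_eq_suminf:
  fixes f :: "nat \<Rightarrow> 'a::{topological_comm_monoid_add, t2_space}"
  assumes "f summable_on UNIV"
  shows "infsum f UNIV = suminf f"
  using assms has_sum_imp_sums sums_unique summable_iff_has_sum_infsum by metis

lemma sums_suminf_swap:
  fixes f :: "nat \<Rightarrow> nat \<Rightarrow> 'a::banach"
  assumes rows: "\<And>i. summable (\<lambda>j. norm (f i j))"
    and total: "summable (\<lambda>i. \<Sum>j. norm (f i j))"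
  shows "(\<lambda>j. \<Sum>i. f i j) sums (\<Sum>i. \<Sum>j. f i j)"
proof -
  have row_infsum: "infsum (\<lambda>j. norm (f i j)) UNIV = (\<Sum>j. norm (f i j))" for i
    by (rule infsum_eq_suminf) (simp add: rows summable_nonneg_imp_summable_on)
  have "(\<lambda>p. norm (case p of (i, j) \<Rightarrow> f i j)) summable_on UNIV \<times> UNIV"
    using rows total
    by (intro iffD2[OF Infinite_Sum.abs_summable_on_Sigma_iff])
      (simp add: row_infsum summable_nonneg_imp_summable_on suminf_nonneg)
  then have joint: "(\<lambda>(i, j). f i j) summable_on UNIV \<times> UNIV"
    by (rule abs_summable_summable)
  then have joint': "(\<lambda>(j, i). f i j) summable_on UNIV \<times> UNIV"
    using summable_on_swap[of "\<lambda>(i, j). f i j" UNIV UNIV] by simp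
  have col: "summable (\<lambda>i. norm (f i j))" for j
  proof (rule summable_comparison_test'[OF total])
    show "norm (norm (f i j)) \<le> (\<Sum>j. norm (f i j))" for i
      using sum_le_suminf[OF rows, of "{j}" i] by simp
  qed
  have row_eq: "infsum (\<lambda>j. f i j) UNIV = (\<Sum>j. f i j)" for i
    by (simp add: infsum_eq_suminf norm_summable_imp_summable_on rows)
  have col_eq: "infsum (\<lambda>i. f i j) UNIV = (\<Sum>i. f i j)" for j
    by (simp add: infsum_eq_suminf norm_summable_imp_summable_on col)
  have "(\<lambda>j. \<Sum>i. f i j) summable_on UNIV"
    using summable_on_Sigma_banach[OF joint'] by (simp add: col_eq)
  then have "(\<lambda>j. \<Sum>i. f i j) sums infsum (\<lambda>j. \<Sum>i. f i j) UNIV"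
    by (rule has_sum_imp_sums[OF has_sum_infsum])
  also have "infsum (\<lambda>j. \<Sum>i. f i j) UNIV = infsum (\<lambda>i. \<Sum>j. f i j) UNIV"
    using infsum_swap_banach[OF joint] by (simp add: row_eq col_eq)
  also have "\<dots> = (\<Sum>i. \<Sum>j. f i j)"
    using summable_on_Sigma_banach[OF joint] by (simp add: row_eq infsum_eq_suminf)
  finally show ?thesis .
qed

lemma
  fixes a :: "nat \<Rightarrow> real" and z :: "'a::{real_normed_div_algebra, banach}"
  assumes a: "summable a" "\<And>k. 0 \<le> a k" and z: "norm z \<le> 1"
  shows summable_norm_of_real_power_series: "summable (\<lambda>k. norm (of_real (a k) * z ^ k))"
    and suminf_norm_of_real_power_series_le: "(\<Sum>k. norm (of_real (a k) * z ^ k)) \<le> suminf a"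
proof -
  have le: "norm (of_real (a k) * z ^ k) \<le> a k" for k
    using a(2)[of k] z by (simp add: norm_mult norm_power mult_left_le power_le_one)
  show summ: "summable (\<lambda>k. norm (of_real (a k) * z ^ k))"
    by (rule summable_comparison_test'[OF a(1)]) (use le in simp)
  show "(\<Sum>k. norm (of_real (a k) * z ^ k)) \<le> suminf a"
    by (rule suminf_le[OF le summ a(1)])
qed

section \<open>Absorption probabilities\<close>

lemma convex_comb_in_unit:
  fixes a b x y :: real
  assumes "0 \<le> a" "0 \<le> b" "a + b = 1" "x \<in> {0..1}" "y \<in> {0..1}"
  shows "a * x + b * y \<in> {0..1}"
proof -
  have "a * x \<le> a" "b * y \<le> b"
    using assms by (auto intro: mult_left_le)
  then show ?thesis
    using assms by auto
qed

lemma geometric_average_in_unit: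
  fixes a :: "nat \<Rightarrow> real"
  assumes "0 \<le> q" "q < 1" "\<And>j. a j \<in> {0..1}"
  shows "summable (\<lambda>j. (1 - q) * q ^ j * a j)" "(\<Sum>j. (1 - q) * q ^ j * a j) \<in> {0..1}"
proof -
  have weights: "(\<lambda>j. (1 - q) * q ^ j) sums 1"
    using sums_mult[OF geometric_sums[of q], of "1 - q"] assms by simp
  have le: "(1 - q) * q ^ j * a j \<le> (1 - q) * q ^ j" for j
    using assms by (auto intro: mult_left_le)
  have nonneg: "0 \<le> (1 - q) * q ^ j * a j" for j
    using assms by auto
  show summ: "summable (\<lambda>j. (1 - q) * q ^ j * a j)"
    by (rule summable_comparison_test'[OF sums_summable[OF weights]]) (use le nonneg in auto)
  have "(\<Sum>j. (1 - q) * q ^ j * a j) \<le> 1"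
    using suminf_le[OF le summ sums_summable[OF weights]] sums_unique[OF weights] by simp
  then show "(\<Sum>j. (1 - q) * q ^ j * a j) \<in> {0..1}"
    using suminf_nonneg[OF summ nonneg] by simp
qed

(* One step of the recursion defining absorb_prob, applied to an arbitrary [0,1]-valued f. *)
lemma absorb_step_in_unit:
  fixes f :: "nat \<Rightarrow> nat \<Rightarrow> real"
  assumes "0 \<le> \<rho>" "0 \<le> q" "q < 1" "b \<noteq> 0" "\<And>m c. f m c \<in> {0..1}"
  shows "\<rho> / (1 + \<rho>) * (\<Sum>j. (1 - q) * q ^ j * f (n + Suc j) b)
           + 1 / (1 + \<rho>) * (real b / real (n + b) * f n (b - 1) + real n / real (n + b) * f (n - 1) b)
         \<in> {0..1}"
proof (rule convex_comb_in_unit)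
  show "(\<Sum>j. (1 - q) * q ^ j * f (n + Suc j) b) \<in> {0..1}"
    using assms by (intro geometric_average_in_unit) auto
  have "real b / real (n + b) + real n / real (n + b) = 1"
    using assms(4) by (simp add: add_divide_distrib[symmetric] add.commute)
  then show "real b / real (n + b) * f n (b - 1) + real n / real (n + b) * f (n - 1) b \<in> {0..1}"
    using assms(5) by (intro convex_comb_in_unit) auto
  show "\<rho> / (1 + \<rho>) + 1 / (1 + \<rho>) = 1"
    using assms(1) by (simp add: field_simps)
qed (use assms(1) in auto)

context
  fixes \<rho> q :: real
  assumes rho: "0 \<le> \<rho>" and q: "0 \<le> q" "q < 1"
begin

lemma absorb_prob_in_unit: "absorb_prob \<rho> q k n b \<in> {0..1}"
proof (induction k arbitrary: n b)
  case (Suc k)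
  show ?case
  proof (cases "b = 0")
    case False
    then show ?thesis
      using absorb_step_in_unit[OF rho q False Suc.IH] by simp
  qed simp
qed simp

lemma summable_absorb_step:
  "summable (\<lambda>j. (1 - q) * q ^ j * absorb_prob \<rho> q k (n + Suc j) b)"
  by (rule geometric_average_in_unit(1)[OF q absorb_prob_in_unit])

(* The partial sums over k obey the same recursion as absorb_prob itself. *)
lemma sum_absorb_prob_in_unit: "(\<Sum>k<K. absorb_prob \<rho> q k n b) \<in> {0..1}"
proof (induction K arbitrary: n b)
  case (Suc K)
  show ?case
  proof (cases "b = 0")
    case False
    have "(\<Sum>k<Suc K. absorb_prob \<rho> q k n b) = (\<Sum>k<K. absorb_prob \<rho> q (Suc k) n b)"
      using False by (simp add: sum.lessThan_Suc_shift del: sum.lessThan_Suc)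
    also have "\<dots> = \<rho> / (1 + \<rho>) * (\<Sum>k<K. \<Sum>j. (1 - q) * q ^ j * absorb_prob \<rho> q k (n + Suc j) b)
           + 1 / (1 + \<rho>) * (real b / real (n + b) * (\<Sum>k<K. absorb_prob \<rho> q k n (b - 1))
                             + real n / real (n + b) * (\<Sum>k<K. absorb_prob \<rho> q k (n - 1) b))"
      using False by (simp add: sum.distrib sum_distrib_left distrib_left)
    also have "(\<Sum>k<K. \<Sum>j. (1 - q) * q ^ j * absorb_prob \<rho> q k (n + Suc j) b)
             = (\<Sum>j. (1 - q) * q ^ j * (\<Sum>k<K. absorb_prob \<rho> q k (n + Suc j) b))"
      unfolding sum_distrib_left by (rule suminf_sum[symmetric]) (rule summable_absorb_step)
    finally show ?thesis
      using absorb_step_in_unit[OF rho q False Suc.IH] by simp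
  qed (simp add: sum.lessThan_Suc_shift del: sum.lessThan_Suc)
qed simp

lemma summable_absorb_prob: "summable (\<lambda>k. absorb_prob \<rho> q k n b)"
proof (rule summableI_nonneg_bounded)
  show "0 \<le> absorb_prob \<rho> q k n b" for k
    using absorb_prob_in_unit by simp
  show "(\<Sum>k<K. absorb_prob \<rho> q k n b) \<le> 1" for K
    using sum_absorb_prob_in_unit by simp
qed

lemma suminf_absorb_prob_le_1: "(\<Sum>k. absorb_prob \<rho> q k n b) \<le> 1"
  by (rule suminf_le_const[OF summable_absorb_prob]) (use sum_absorb_prob_in_unit in simp)

end

section \<open>Transforms of the batch sojourn times\<close>

definition holding_LT :: "real \<Rightarrow> complex \<Rightarrow> complex" where
  "holding_LT \<rho> s = complex_of_real (1 + \<rho>) / (complex_of_real (1 + \<rho>) + s)"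

lemma estar_holding_LT:
  "estar \<rho> q n b s = (\<Sum>k. complex_of_real (absorb_prob \<rho> q k n b) * holding_LT \<rho> s ^ k)"
  unfolding estar_def holding_LT_def ..

lemma holding_LT_denom_nonzero:
  assumes "0 \<le> \<rho>" "0 \<le> Re s"
  shows "complex_of_real (1 + \<rho>) + s \<noteq> 0"
proof
  assume "complex_of_real (1 + \<rho>) + s = 0"
  then have "Re (complex_of_real (1 + \<rho>) + s) = 0" by simp
  with assms show False by simp
qed

lemma norm_holding_LT_le_1:
  assumes "0 \<le> \<rho>" "0 \<le> Re s"
  shows "norm (holding_LT \<rho> s) \<le> 1"
proof -
  have "1 + \<rho> \<le> Re (complex_of_real (1 + \<rho>) + s)"
    using assms by simp
  also have "\<dots> \<le> norm (complex_of_real (1 + \<rho>) + s)"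
    by (rule complex_Re_le_cmod)
  finally have "norm (complex_of_real (1 + \<rho>)) \<le> norm (complex_of_real (1 + \<rho>) + s)"
    using assms by (simp only: norm_of_real)
  then show ?thesis
    unfolding holding_LT_def norm_divide by (simp add: divide_le_eq_1)
qed

lemma estar_0: "estar \<rho> q n 0 s = 1"
proof -
  have "(\<lambda>k. complex_of_real (absorb_prob \<rho> q k n 0) * holding_LT \<rho> s ^ k) = (\<lambda>k. if k = 0 then 1 else 0)"
  proof
    show "complex_of_real (absorb_prob \<rho> q k n 0) * holding_LT \<rho> s ^ k = (if k = 0 then 1 else 0)" for k
      by (cases k) simp_all
  qed
  then show ?thesis
    unfolding estar_holding_LT by (simp add: sums_unique[OF sums_single, symmetric])
qed

context
  fixes \<rho> q :: real and s :: complex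
  assumes rho: "0 \<le> \<rho>" and q: "0 \<le> q" "q < 1" and s: "0 \<le> Re s"
begin

lemma summable_norm_estar_series:
  "summable (\<lambda>k. norm (complex_of_real (absorb_prob \<rho> q k n b) * holding_LT \<rho> s ^ k))"
  using absorb_prob_in_unit[OF rho q]
  by (intro summable_norm_of_real_power_series summable_absorb_prob[OF rho q]
      norm_holding_LT_le_1[OF rho s]) simp

lemma estar_sums:
  "(\<lambda>k. complex_of_real (absorb_prob \<rho> q k n b) * holding_LT \<rho> s ^ k) sums estar \<rho> q n b s"
  unfolding estar_holding_LT by (rule summable_sums[OF summable_norm_cancel[OF summable_norm_estar_series]])

lemma suminf_norm_estar_series_le_1:
  "(\<Sum>k. norm (complex_of_real (absorb_prob \<rho> q k n b) * holding_LT \<rho> s ^ k)) \<le> 1"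
proof -
  have "(\<Sum>k. norm (complex_of_real (absorb_prob \<rho> q k n b) * holding_LT \<rho> s ^ k))
        \<le> (\<Sum>k. absorb_prob \<rho> q k n b)"
    using absorb_prob_in_unit[OF rho q]
    by (intro suminf_norm_of_real_power_series_le summable_absorb_prob[OF rho q]
        norm_holding_LT_le_1[OF rho s]) simp
  also have "\<dots> \<le> 1"
    by (rule suminf_absorb_prob_le_1[OF rho q])
  finally show ?thesis .
qed

lemma norm_estar_le_1: "norm (estar \<rho> q n b s) \<le> 1"
  unfolding estar_holding_LT
  using summable_norm[OF summable_norm_estar_series] suminf_norm_estar_series_le_1 by (rule order_trans)

lemma sums_estar_arrival:
  "(\<lambda>k. complex_of_real (\<Sum>j. (1 - q) * q ^ j * absorb_prob \<rho> q k (n + Suc j) b) * holding_LT \<rho> s ^ k)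
     sums (\<Sum>j. complex_of_real ((1 - q) * q ^ j) * estar \<rho> q (n + Suc j) b s)"
proof -
  define z where "z = holding_LT \<rho> s"
  define P where "P = absorb_prob \<rho> q"
  define f where "f j k = complex_of_real ((1 - q) * q ^ j) * (complex_of_real (P k (n + Suc j) b) * z ^ k)" for j k
  have norm_f: "norm (f j k) = (1 - q) * q ^ j * norm (complex_of_real (P k (n + Suc j) b) * z ^ k)" for j k
    unfolding f_def norm_mult norm_of_real using q by simp
  have rows: "summable (\<lambda>k. norm (f j k))" for j
    unfolding norm_f P_def z_def by (intro summable_mult summable_norm_estar_series)
  have "summable (\<lambda>j. (1 - q) * q ^ j)"
    using q by (intro summable_mult) simp
  then have total: "summable (\<lambda>j. \<Sum>k. norm (f j k))"
  proof (rule summable_comparison_test')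
    show "norm (\<Sum>k. norm (f j k)) \<le> (1 - q) * q ^ j" for j
      using q suminf_norm_estar_series_le_1[of "n + Suc j" b]
      unfolding norm_f P_def z_def
      by (simp add: suminf_mult[OF summable_norm_estar_series] suminf_nonneg
          summable_norm_estar_series mult_left_le)
  qed
  have "complex_of_real (\<Sum>j. (1 - q) * q ^ j * P k (n + Suc j) b) * z ^ k = (\<Sum>j. f j k)" for k
  proof -
    have "complex_of_real (\<Sum>j. (1 - q) * q ^ j * P k (n + Suc j) b) * z ^ k
        = (\<Sum>j. complex_of_real ((1 - q) * q ^ j * P k (n + Suc j) b)) * z ^ k"
      unfolding P_def by (subst suminf_of_real[OF summable_absorb_step[OF rho q]]) (rule refl)
    also have "\<dots> = (\<Sum>j. complex_of_real ((1 - q) * q ^ j * P k (n + Suc j) b) * z ^ k)"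
      unfolding P_def by (rule suminf_mult2[OF summable_of_real[OF summable_absorb_step[OF rho q]]])
    also have "\<dots> = (\<Sum>j. f j k)"
      unfolding f_def by (simp only: of_real_mult mult.assoc)
    finally show ?thesis .
  qed
  moreover have "(\<Sum>k. f j k) = complex_of_real ((1 - q) * q ^ j) * estar \<rho> q (n + Suc j) b s" for j
    unfolding f_def P_def z_def estar_holding_LT
    by (rule suminf_mult[OF summable_norm_cancel[OF summable_norm_estar_series]])
  ultimately show ?thesis
    using sums_suminf_swap[OF rows total] by (simp only: P_def z_def)
qed

lemma estar_first_step:
  "(complex_of_real (1 + \<rho>) + s) * estar \<rho> q n (Suc b) s =
     complex_of_real \<rho> * (\<Sum>j. complex_of_real ((1 - q) * q ^ j) * estar \<rho> q (n + Suc j) (Suc b) s)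
     + complex_of_real (real (Suc b) / real (n + Suc b)) * estar \<rho> q n b s
     + complex_of_real (real n / real (n + Suc b)) * estar \<rho> q (n - 1) (Suc b) s"
proof -
  define z where "z = holding_LT \<rho> s"
  define P where "P = absorb_prob \<rho> q"
  define \<alpha> where "\<alpha> = complex_of_real (real (Suc b) / real (n + Suc b))"
  define \<beta> where "\<beta> = complex_of_real (real n / real (n + Suc b))"
  define S where "S k = (\<Sum>j. (1 - q) * q ^ j * P k (n + Suc j) (Suc b))" for k
  define X where "X = (\<Sum>j. complex_of_real ((1 - q) * q ^ j) * estar \<rho> q (n + Suc j) (Suc b) s)"
  define Y where "Y = \<alpha> * estar \<rho> q n b s + \<beta> * estar \<rho> q (n - 1) (Suc b) s"
  have S_sums: "(\<lambda>k. complex_of_real (S k) * z ^ k) sums X"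
    unfolding S_def X_def P_def z_def by (rule sums_estar_arrival)
  have step: "complex_of_real (P (Suc k) n (Suc b)) * z ^ Suc k
      = z * complex_of_real (\<rho> / (1 + \<rho>)) * (complex_of_real (S k) * z ^ k)
        + z * complex_of_real (1 / (1 + \<rho>)) * (\<alpha> * (complex_of_real (P k n b) * z ^ k)
                                              + \<beta> * (complex_of_real (P k (n - 1) (Suc b)) * z ^ k))" for k
    by (simp add: P_def S_def \<alpha>_def \<beta>_def algebra_simps)
  have "(\<lambda>k. complex_of_real (P (Suc k) n (Suc b)) * z ^ Suc k)
        sums (z * complex_of_real (\<rho> / (1 + \<rho>)) * X + z * complex_of_real (1 / (1 + \<rho>)) * Y)"
    unfolding step Y_def by (intro sums_add sums_mult S_sums estar_sums[folded P_def z_def])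
  then have "(\<lambda>k. complex_of_real (P k n (Suc b)) * z ^ k)
        sums (z * complex_of_real (\<rho> / (1 + \<rho>)) * X + z * complex_of_real (1 / (1 + \<rho>)) * Y
              + complex_of_real (P 0 n (Suc b)) * z ^ 0)"
    by (rule sums_Suc_iff[THEN iffD1])
  then have estar_eq: "estar \<rho> q n (Suc b) s
      = z * (complex_of_real (\<rho> / (1 + \<rho>)) * X + complex_of_real (1 / (1 + \<rho>)) * Y)"
    using sums_unique2[OF estar_sums] unfolding P_def z_def by (simp add: distrib_left mult.assoc)
  have nonzero: "complex_of_real (1 + \<rho>) \<noteq> 0"
    using rho by (simp only: of_real_eq_0_iff)
  have "(complex_of_real (1 + \<rho>) + s) * z = complex_of_real (1 + \<rho>)"
    using holding_LT_denom_nonzero[OF rho s] by (simp add: z_def holding_LT_def)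
  then have "(complex_of_real (1 + \<rho>) + s) * estar \<rho> q n (Suc b) s
      = complex_of_real (1 + \<rho>) * (complex_of_real (\<rho> / (1 + \<rho>)) * X + complex_of_real (1 / (1 + \<rho>)) * Y)"
    unfolding estar_eq by (simp only: mult.assoc[symmetric])
  also have "\<dots> = complex_of_real \<rho> * X + Y"
    using nonzero by (simp add: distrib_left mult.assoc[symmetric] of_real_mult[symmetric] del: of_real_mult)
  finally show ?thesis
    by (simp add: X_def Y_def \<alpha>_def \<beta>_def add.assoc)
qed

end

section \<open>Generating functions\<close>

definition Egf_row :: "real \<Rightarrow> real \<Rightarrow> complex \<Rightarrow> nat \<Rightarrow> complex \<Rightarrow> complex" where
  "Egf_row \<rho> q s n v = (\<Sum>b. estar \<rho> q n (Suc b) s * v ^ Suc b)"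

context
  fixes \<rho> q :: real and s :: complex
  assumes rho: "0 \<le> \<rho>" and q: "0 \<le> q" "q < 1" and s: "0 \<le> Re s"
begin

lemma norm_estar_power_le: "norm (estar \<rho> q n b s * v ^ k) \<le> norm v ^ k"
  using norm_estar_le_1[OF rho q s] by (simp add: norm_mult norm_power mult_left_le_one_le)

lemma
  assumes v: "norm v < 1"
  shows summable_norm_Egf_row: "summable (\<lambda>b. norm (estar \<rho> q n (Suc b) s * v ^ Suc b))"
    and suminf_norm_Egf_row_le: "(\<Sum>b. norm (estar \<rho> q n (Suc b) s * v ^ Suc b)) \<le> 1 / (1 - norm v)"
proof -
  have geom: "summable (\<lambda>b. norm v ^ Suc b)"
    using v by (simp add: summable_Suc_iff)
  show summ: "summable (\<lambda>b. norm (estar \<rho> q n (Suc b) s * v ^ Suc b))"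
    by (rule summable_comparison_test'[OF geom]) (use norm_estar_power_le in \<open>simp del: power_Suc\<close>)
  have "(\<Sum>b. norm (estar \<rho> q n (Suc b) s * v ^ Suc b)) \<le> (\<Sum>b. norm v ^ Suc b)"
    by (rule suminf_le[OF norm_estar_power_le summ geom])
  also have "\<dots> \<le> (\<Sum>b. norm v ^ b)"
    using v by (intro suminf_le geom) (auto simp: mult_left_le_one_le)
  also have "\<dots> = 1 / (1 - norm v)"
    using v by (simp add: suminf_geometric)
  finally show "(\<Sum>b. norm (estar \<rho> q n (Suc b) s * v ^ Suc b)) \<le> 1 / (1 - norm v)" .
qed

lemma norm_Egf_row_le:
  assumes "norm v < 1"
  shows "norm (Egf_row \<rho> q s n v) \<le> 1 / (1 - norm v)"
  unfolding Egf_row_def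
  using summable_norm[OF summable_norm_Egf_row[OF assms]] suminf_norm_Egf_row_le[OF assms]
  by (rule order_trans)

lemma summable_Egf_row_series:
  assumes "norm u < 1" "norm v < 1"
  shows "summable (\<lambda>n. Egf_row \<rho> q s n v * u ^ n)"
proof (rule summable_norm_cancel, rule summable_comparison_test')
  show "summable (\<lambda>n. 1 / (1 - norm v) * norm u ^ n)"
    using assms by (intro summable_mult) simp
  show "norm (norm (Egf_row \<rho> q s n v * u ^ n)) \<le> 1 / (1 - norm v) * norm u ^ n" for n
    using mult_right_mono[OF norm_Egf_row_le[OF assms(2)], of "norm u ^ n"]
    by (simp add: norm_mult norm_power)
qed

lemma Egf_eq_Egf_row_series:
  assumes "norm v < 1"
  shows "Egf \<rho> q s u v = (\<Sum>n. Egf_row \<rho> q s n v * u ^ n)"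
  unfolding Egf_def Egf_row_def
proof (rule suminf_cong)
  show "(\<Sum>b. estar \<rho> q n (Suc b) s * u ^ n * v ^ Suc b) = (\<Sum>b. estar \<rho> q n (Suc b) s * v ^ Suc b) * u ^ n" for n
    using suminf_mult2[OF summable_norm_cancel[OF summable_norm_Egf_row[OF assms]], where c = "u ^ n"]
    by (simp add: mult_ac)
qed

lemma Egf_split_row_0:
  assumes "norm u < 1" "norm v < 1"
  shows "Egf \<rho> q s u v = Egf_row \<rho> q s 0 v + (\<Sum>n. Egf_row \<rho> q s (Suc n) v * u ^ Suc n)"
  using suminf_split_head[OF summable_Egf_row_series[OF assms]]
  by (simp add: Egf_eq_Egf_row_series[OF assms(2)])

lemma summable_geometric_estar_mixture:
  "summable (\<lambda>j. complex_of_real ((1 - q) * q ^ j) * estar \<rho> q (Suc j) b s)"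
proof (rule summable_norm_cancel, rule summable_comparison_test')
  show "summable (\<lambda>j. (1 - q) * q ^ j)"
    using q by (intro summable_mult) simp
  show "norm (norm (complex_of_real ((1 - q) * q ^ j) * estar \<rho> q (Suc j) b s)) \<le> (1 - q) * q ^ j" for j
  proof -
    have "norm (complex_of_real ((1 - q) * q ^ j) * estar \<rho> q (Suc j) b s)
        = (1 - q) * q ^ j * norm (estar \<rho> q (Suc j) b s)"
      unfolding norm_mult norm_of_real using q by simp
    then show ?thesis
      using q norm_estar_le_1[OF rho q s, of "Suc j" b] by (simp add: mult_left_le)
  qed
qed

lemma geometric_mixture_Egf_rows:
  assumes q0: "0 < q" and v: "norm v < 1"
  shows "(\<Sum>j. complex_of_real ((1 - q) * q ^ j) * Egf_row \<rho> q s (Suc j) v)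
       = complex_of_real ((1 - q) / q) * (Egf \<rho> q s (complex_of_real q) v - Egf_row \<rho> q s 0 v)"
proof -
  have Q: "norm (complex_of_real q) < 1"
    using q by simp
  have tail: "summable (\<lambda>j. Egf_row \<rho> q s (Suc j) v * complex_of_real q ^ Suc j)"
    using summable_Egf_row_series[OF Q v] by (subst summable_Suc_iff)
  have "complex_of_real ((1 - q) * q ^ j) * Egf_row \<rho> q s (Suc j) v
      = complex_of_real ((1 - q) / q) * (Egf_row \<rho> q s (Suc j) v * complex_of_real q ^ Suc j)" for j
  proof -
    have "complex_of_real ((1 - q) * q ^ j) = complex_of_real ((1 - q) / q) * complex_of_real q ^ Suc j"
      using q0 by simp
    then show ?thesis
      by (simp only: mult_ac)
  qed
  then have "(\<Sum>j. complex_of_real ((1 - q) * q ^ j) * Egf_row \<rho> q s (Suc j) v)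
      = complex_of_real ((1 - q) / q) * (\<Sum>j. Egf_row \<rho> q s (Suc j) v * complex_of_real q ^ Suc j)"
    by (simp only: suminf_mult[OF tail])
  also have "(\<Sum>j. Egf_row \<rho> q s (Suc j) v * complex_of_real q ^ Suc j)
      = Egf \<rho> q s (complex_of_real q) v - Egf_row \<rho> q s 0 v"
    using Egf_split_row_0[OF Q v] by simp
  finally show ?thesis .
qed

lemma sums_Egf_row_arrival:
  assumes q0: "0 < q" and v: "norm v < 1"
  shows "(\<lambda>b. (\<Sum>j. complex_of_real ((1 - q) * q ^ j) * estar \<rho> q (Suc j) (Suc b) s) * v ^ Suc b)
           sums (complex_of_real ((1 - q) / q) * (Egf \<rho> q s (complex_of_real q) v - Egf_row \<rho> q s 0 v))"
proof -
  define g where "g j b = complex_of_real ((1 - q) * q ^ j) * (estar \<rho> q (Suc j) (Suc b) s * v ^ Suc b)" for j b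
  have norm_g: "norm (g j b) = (1 - q) * q ^ j * norm (estar \<rho> q (Suc j) (Suc b) s * v ^ Suc b)" for j b
    unfolding g_def norm_mult norm_of_real using q by simp
  have rows: "summable (\<lambda>b. norm (g j b))" for j
    unfolding norm_g by (intro summable_mult summable_norm_Egf_row[OF v])
  have "summable (\<lambda>j. (1 - q) * q ^ j * (1 / (1 - norm v)))"
    using q by (intro summable_mult2 summable_mult) simp
  then have total: "summable (\<lambda>j. \<Sum>b. norm (g j b))"
  proof (rule summable_comparison_test')
    fix j
    have "(\<Sum>b. norm (g j b)) = (1 - q) * q ^ j * (\<Sum>b. norm (estar \<rho> q (Suc j) (Suc b) s * v ^ Suc b))"
      unfolding norm_g by (rule suminf_mult[OF summable_norm_Egf_row[OF v]])
    also have "\<dots> \<le> (1 - q) * q ^ j * (1 / (1 - norm v))"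
      by (rule mult_left_mono[OF suminf_norm_Egf_row_le[OF v]]) (use q in simp)
    finally show "norm (\<Sum>b. norm (g j b)) \<le> (1 - q) * q ^ j * (1 / (1 - norm v))"
      using suminf_nonneg[OF rows norm_ge_zero] by (simp add: abs_of_nonneg)
  qed
  have "(\<Sum>j. g j b) = (\<Sum>j. complex_of_real ((1 - q) * q ^ j) * estar \<rho> q (Suc j) (Suc b) s) * v ^ Suc b" for b
    unfolding g_def using suminf_mult2[OF summable_geometric_estar_mixture, where c = "v ^ Suc b"]
    by (simp only: mult.assoc)
  moreover have "(\<Sum>b. g j b) = complex_of_real ((1 - q) * q ^ j) * Egf_row \<rho> q s (Suc j) v" for j
    unfolding g_def Egf_row_def by (rule suminf_mult[OF summable_norm_cancel[OF summable_norm_Egf_row[OF v]]])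
  ultimately show ?thesis
    using sums_suminf_swap[OF rows total] geometric_mixture_Egf_rows[OF q0 v] by simp
qed

lemma Egf_row_0_equation:
  assumes q0: "0 < q" and v: "norm v < 1"
  shows "(complex_of_real (1 + \<rho>) + s) * Egf_row \<rho> q s 0 v
       = complex_of_real \<rho> * (complex_of_real ((1 - q) / q) * (Egf \<rho> q s (complex_of_real q) v - Egf_row \<rho> q s 0 v))
         + v * (1 + Egf_row \<rho> q s 0 v)"
proof -
  define E0 where "E0 = Egf_row \<rho> q s 0 v"
  define X where "X b = (\<Sum>j. complex_of_real ((1 - q) * q ^ j) * estar \<rho> q (Suc j) (Suc b) s)" for b
  have E0_sums: "(\<lambda>b. estar \<rho> q 0 (Suc b) s * v ^ Suc b) sums E0"
    unfolding E0_def Egf_row_def by (rule summable_sums[OF summable_norm_cancel[OF summable_norm_Egf_row[OF v]]])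
  have "(\<lambda>b. estar \<rho> q 0 (Suc b) s * v ^ Suc (Suc b)) sums (v * E0)"
    using sums_mult[OF E0_sums, of v] by (simp add: mult_ac)
  then have departures: "(\<lambda>b. estar \<rho> q 0 b s * v ^ Suc b) sums (v * (1 + E0))"
    using sums_Suc_iff[where f = "\<lambda>b. estar \<rho> q 0 b s * v ^ Suc b"] by (simp add: estar_0 algebra_simps)
  have "(\<lambda>b. complex_of_real \<rho> * (X b * v ^ Suc b) + estar \<rho> q 0 b s * v ^ Suc b)
      sums (complex_of_real \<rho> * (complex_of_real ((1 - q) / q) * (Egf \<rho> q s (complex_of_real q) v - E0))
            + v * (1 + E0))"
    unfolding X_def E0_def by (intro sums_add sums_mult departures[unfolded E0_def] sums_Egf_row_arrival q0 v)
  moreover have "complex_of_real \<rho> * (X b * v ^ Suc b) + estar \<rho> q 0 b s * v ^ Suc b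
      = (complex_of_real (1 + \<rho>) + s) * (estar \<rho> q 0 (Suc b) s * v ^ Suc b)" for b
    using estar_first_step[OF rho q s, of 0 b] by (simp add: X_def algebra_simps)
  ultimately show ?thesis
    using sums_unique2[OF sums_mult[OF E0_sums]] by (simp add: E0_def)
qed

end

section \<open>The stationary batch\<close>

lemma stat_pmf_batch_pmf_eq:
  assumes "0 \<le> \<rho>" "0 < q" "q < 1"
  shows "stat_pmf \<rho> q n * batch_pmf q (Suc b)
       = (if n = 0 then (1 - \<rho> - q) / q else (1 - \<rho> - q) * \<rho> / (q * (\<rho> + q)) * (\<rho> + q) ^ n) * q ^ Suc b"
proof -
  define a where "a = 1 - \<rho> / (1 - q)"
  have a: "a * (1 - q) = 1 - \<rho> - q"
    unfolding a_def using assms by (simp add: field_simps)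
  have "\<rho> + q \<noteq> 0" "q \<noteq> 0"
    using assms by auto
  then show ?thesis
    unfolding stat_pmf_def batch_pmf_def a_def[symmetric] a[symmetric]
    by (cases n) (simp_all add: divide_simps)
qed

lemma stat_LT_eq_Egf:
  assumes rho: "0 \<le> \<rho>" and q0: "0 < q" and rq: "\<rho> + q < 1" and s: "0 \<le> Re s"
  shows "stat_LT \<rho> q s
       = complex_of_real ((1 - \<rho> - q) / q) * Egf_row \<rho> q s 0 (complex_of_real q)
         + complex_of_real ((1 - \<rho> - q) * \<rho> / (q * (\<rho> + q)))
           * (Egf \<rho> q s (complex_of_real (\<rho> + q)) (complex_of_real q) - Egf_row \<rho> q s 0 (complex_of_real q))"
proof -
  have q: "0 \<le> q" "q < 1"
    using rho q0 rq by auto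
  have Q: "norm (complex_of_real q) < 1" and U: "norm (complex_of_real (\<rho> + q)) < 1"
    unfolding norm_of_real using rho q0 rq by auto
  define K where "K = (1 - \<rho> - q) * \<rho> / (q * (\<rho> + q))"
  define c where "c n = (if n = 0 then (1 - \<rho> - q) / q else K * (\<rho> + q) ^ n)" for n
  have weights: "complex_of_real (stat_pmf \<rho> q n) * complex_of_real (batch_pmf q (Suc b))
      = complex_of_real (c n) * complex_of_real q ^ Suc b" for n b
    unfolding of_real_mult[symmetric] of_real_power[symmetric] c_def K_def
    by (rule arg_cong[where f = of_real]) (rule stat_pmf_batch_pmf_eq[OF rho q0 q(2)])
  have rows: "(\<Sum>b. estar \<rho> q n (Suc b) s * complex_of_real (stat_pmf \<rho> q n) * complex_of_real (batch_pmf q (Suc b)))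
      = complex_of_real (c n) * Egf_row \<rho> q s n (complex_of_real q)" for n
    unfolding Egf_row_def mult.assoc weights
    using suminf_mult[OF summable_norm_cancel[OF summable_norm_Egf_row[OF rho q s Q]], of "complex_of_real (c n)" n]
    by (simp add: mult_ac)
  define T where "T n = complex_of_real (c n) * Egf_row \<rho> q s n (complex_of_real q)" for n
  have tail: "(\<lambda>n. T (Suc n))
      = (\<lambda>n. complex_of_real K * (Egf_row \<rho> q s (Suc n) (complex_of_real q) * complex_of_real (\<rho> + q) ^ Suc n))"
    unfolding T_def c_def by (simp only: nat.distinct if_False of_real_mult of_real_power mult_ac)
  have tail_summable: "summable (\<lambda>n. Egf_row \<rho> q s (Suc n) (complex_of_real q) * complex_of_real (\<rho> + q) ^ Suc n)"
    using summable_Egf_row_series[OF rho q s U Q] by (subst summable_Suc_iff)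
  then have "summable (\<lambda>n. T (Suc n))"
    unfolding tail by (rule summable_mult)
  then have "summable T"
    by (simp only: summable_Suc_iff)
  have "stat_LT \<rho> q s = suminf T"
    unfolding stat_LT_def rows T_def ..
  also have "\<dots> = T 0 + (\<Sum>n. T (Suc n))"
    using suminf_split_head[OF \<open>summable T\<close>] by simp
  also have "(\<Sum>n. T (Suc n))
      = complex_of_real K * (\<Sum>n. Egf_row \<rho> q s (Suc n) (complex_of_real q) * complex_of_real (\<rho> + q) ^ Suc n)"
    unfolding tail by (rule suminf_mult[OF tail_summable])
  finally show ?thesis
    using Egf_split_row_0[OF rho q s U Q] by (simp add: T_def c_def K_def)
qed

(* The boundary equation determines E0 = (Q^2 + r (1 - Q) G) / (Q + r + Q sigma - Q^2). *)
lemma eliminate_boundary_row: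
  fixes r Q \<sigma> E0 G G' :: "'a::field"
  assumes r: "r \<noteq> 0" and Q: "Q \<noteq> 0" and rQ: "r + Q \<noteq> 0" and D: "Q + r + Q * \<sigma> - Q\<^sup>2 \<noteq> 0"
    and boundary: "(1 + r + \<sigma>) * E0 = r * ((1 - Q) / Q * (G - E0)) + Q * (1 + E0)"
  shows "(1 - r - Q) / Q * E0 + (1 - r - Q) * r / (Q * (r + Q)) * (G' - E0)
       = (1 - r - Q) / (Q * (r + Q))
         * (r\<^sup>2 * ((G' - G) / r) + (Q ^ 3 + r * (Q * \<sigma> + (r + 2 * Q * (1 - Q))) * G) / (Q + r + Q * \<sigma> - Q\<^sup>2))"
proof -
  have "Q * ((1 + r + \<sigma>) * E0) = r * (1 - Q) * (G - E0) + Q * Q * (1 + E0)"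
    unfolding boundary using Q by (simp add: field_simps)
  moreover have "E0 * (Q + r + Q * \<sigma> - Q\<^sup>2) - (Q\<^sup>2 + r * (1 - Q) * G)
      = Q * ((1 + r + \<sigma>) * E0) - (r * (1 - Q) * (G - E0) + Q * Q * (1 + E0))"
    by (simp add: algebra_simps power2_eq_square)
  ultimately have "E0 * (Q + r + Q * \<sigma> - Q\<^sup>2) = Q\<^sup>2 + r * (1 - Q) * G"
    by simp
  moreover have "(Q ^ 3 + r * (Q * \<sigma> + (r + 2 * Q * (1 - Q))) * G)
      - (Q * E0 + r * G) * (Q + r + Q * \<sigma> - Q\<^sup>2)
      = Q * (Q\<^sup>2 + r * (1 - Q) * G - E0 * (Q + r + Q * \<sigma> - Q\<^sup>2))"
    by (simp add: algebra_simps power2_eq_square power3_eq_cube)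
  ultimately have quotient: "(Q ^ 3 + r * (Q * \<sigma> + (r + 2 * Q * (1 - Q))) * G) / (Q + r + Q * \<sigma> - Q\<^sup>2)
      = Q * E0 + r * G"
    using D by (simp add: divide_eq_eq)
  have difference: "r\<^sup>2 * ((G' - G) / r) = r * (G' - G)"
    using r by (simp add: power2_eq_square)
  define c where "c = (1 - r - Q) / (Q * (r + Q))"
  have "(1 - r - Q) / Q = c * (r + Q)" and "(1 - r - Q) * r / (Q * (r + Q)) = c * r"
    unfolding c_def using rQ by simp_all
  then have "(1 - r - Q) / Q * E0 + (1 - r - Q) * r / (Q * (r + Q)) * (G' - E0)
      = c * (r * (G' - G) + (Q * E0 + r * G))"
    by (simp add: algebra_simps)
  then show ?thesis
    unfolding quotient difference c_def .
qed

lemma stat_LT_denominator_nonzero: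
  fixes \<rho> q :: real and s :: complex
  assumes "0 < \<rho>" "0 < q" "q < 1" "0 \<le> Re s"
  shows "complex_of_real q + complex_of_real \<rho> + complex_of_real q * s - (complex_of_real q)\<^sup>2 \<noteq> 0"
proof -
  have "q * q < q" and "0 \<le> q * Re s"
    using assms by simp_all
  then have "0 < Re (complex_of_real q + complex_of_real \<rho> + complex_of_real q * s - (complex_of_real q)\<^sup>2)"
    using assms(1) by (simp add: power2_eq_square)
  then show ?thesis
    by (metis less_irrefl zero_complex.sel(1))
qed

theorem mainTheorem1:
  fixes \<rho> q :: real and s :: complex
  assumes "\<rho> > 0" and "0 < q" and "q < 1" and "\<rho> + q < 1" and "Re s \<ge> 0"
  shows "stat_LT \<rho> q s =
    complex_of_real ((1 - \<rho> - q) / (q * (\<rho> + q))) *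
      (complex_of_real (\<rho> ^ 2) * Fgf \<rho> q s (complex_of_real (\<rho> + q)) (complex_of_real q)
       + (complex_of_real (q ^ 3)
          + complex_of_real \<rho> * (complex_of_real q * s + complex_of_real (\<rho> + 2 * q * (1 - q)))
            * Egf \<rho> q s (complex_of_real q) (complex_of_real q))
         / (complex_of_real (q + \<rho>) + complex_of_real q * s - complex_of_real (q ^ 2)))"
proof -
  let ?r = "complex_of_real \<rho>" and ?Q = "complex_of_real q" and ?U = "complex_of_real (\<rho> + q)"
  have rho: "0 \<le> \<rho>" and q: "0 \<le> q" "q < 1" and Q: "norm ?Q < 1"
    using assms by auto
  have nonzero: "?r \<noteq> 0" "?Q \<noteq> 0" "?r + ?Q \<noteq> 0"
    using assms by (simp_all flip: of_real_add)
  have boundary: "(1 + ?r + s) * Egf_row \<rho> q s 0 ?Q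
      = ?r * ((1 - ?Q) / ?Q * (Egf \<rho> q s ?Q ?Q - Egf_row \<rho> q s 0 ?Q)) + ?Q * (1 + Egf_row \<rho> q s 0 ?Q)"
    using Egf_row_0_equation[OF rho q assms(5) assms(2) Q] by simp
  have "Fgf \<rho> q s ?U ?Q = (Egf \<rho> q s ?U ?Q - Egf \<rho> q s ?Q ?Q) / ?r"
    using assms by (simp add: Fgf_def)
  then show ?thesis
    using eliminate_boundary_row[OF nonzero stat_LT_denominator_nonzero[OF assms(1-3,5)] boundary,
        of "Egf \<rho> q s ?U ?Q"]
    unfolding stat_LT_eq_Egf[OF rho assms(2,4,5)] by (simp add: add.commute)
qed

end
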